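(* Let $n\ge 2$ and $0\le r\le n$, and work in the polynomial ring $R=k[\alpha_{i,0},\alpha_{i,1},\beta_{m,0},\beta_{m,1}: 1\le i\le n,\ 1\le m\le n-2]$, with $f_n(x,y)=\prod_{i=1}^n(\alpha_{i,0}x-\alpha_{i,1}y)$ and $f_{n-2}(x,y)=\prod_{m=1}^{n-2}(\beta_{m,0}x-\beta_{m,1}y)$. For $(n,r)=(2,2)$ one has $DR_{2,2}(f_2,f_0)=f_0^2$, where $f_0$ is the constant binary form of degree $0$. For every other pair $(n,r)$ the following identity holds in $R$: $$DR_{n,r}(f_n,f_{n-2})=\sum_{\substack{I\sqcup J=[n]\\ |I|=r}}\left(\prod_{\substack{j\in J\\ i\in[n]\setminus\{j\}}}[\alpha_i,\alpha_j]\cdot\prod_{\substack{i\in I\\ m\in[n-2]}}[\beta_m,\alpha_i]\right),$$ where $[N]=\{1,\dots,N\}$ and the sum runs over all ordered decompositions of $[n]$ into disjoint subsets $I,J$ with $|I|=r$.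
   Context: Let $k$ be a field of characteristic zero. For pairs of elements $\sigma=(\sigma_0,\sigma_1)$, $\tau=(\tau_0,\tau_1)$ of a commutative ring (written $\alpha_i=(\alpha_{i,0},\alpha_{i,1})$, $\beta_m=(\beta_{m,0},\beta_{m,1})$), the bracket is $[\sigma,\tau]:=\sigma_0\tau_1-\tau_0\sigma_1$. Resultant convention: if $f=\prod_{i=1}^d(\gamma_{i,0}x-\gamma_{i,1}y)$ and $g=\prod_{j=1}^e(\delta_{j,0}x-\delta_{j,1}y)$ are binary forms of degrees $d,e$, then $\mathrm{res}(f,g)=\prod_{i=1}^d\prod_{j=1}^e[\gamma_i,\delta_j]$; this is a polynomial in the coefficients of $f$ and $g$ (the classical resultant of binary forms), and it is used for forms with coefficients in any commutative $k$-algebra. Discriminant-resultants: for $n\ge2$, write a binary form of degree $n$ as $f(x,y)=\sum_{i=0}^n a_ix^iy^{n-i}$ and let $g$ be a binary form of degree $n-2$. The polynomials $DR_{n,r}(f,g)$ ($0\le r\le n$) in the coefficients of $f,g$ are defined by $$\sum_{r=0}^n DR_{n,r}(f,g)\,t^r=\mathrm{res}\big(f(x,y),\,x\partial_xf(x,y)+t\,xy\,g(x,y)\big)/(a_0a_n),$$ where $t$ is an indeterminate, the second argument is regarded as a binary form of degree $n$ with coefficients in $k[t]$, and the division by $a_0a_n$ is exact. $DR_{n,r}$ is bihomogeneous of degree $2n-2-r$ in the coefficients of $f$ and degree $r$ in those of $g$. *)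

theory Defs
  imports "HOL-Computational_Algebra.Polynomial" "Jordan_Normal_Form.Determinant"
begin

definition bracket :: "'a::comm_ring_1 \<times> 'a \<Rightarrow> 'a \<times> 'a \<Rightarrow> 'a" where
  "bracket s t = fst s * snd t - fst t * snd s"

text \<open>A binary form of (formal) degree d, sum_i a_i x^i y^(d-i), is represented by the
  univariate polynomial F with coeff F i = a_i (i.e. its dehomogenisation at y = 1);
  the formal degree d is passed separately.
  The linear form s0 x - s1 y is represented by [:-s1, s0:].\<close>
definition lin_form :: "'a::comm_ring_1 \<times> 'a \<Rightarrow> 'a poly" where
  "lin_form s = [: - snd s, fst s :]"

text \<open>Classical resultant of binary forms of formal degrees d and e (Sylvester determinant),
  normalised so that res(prod_i (g_i0 x - g_i1 y), prod_j (h_j0 x - h_j1 y)) = prod_{i,j} [g_i,h_j].\<close>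
definition res_form :: "nat \<Rightarrow> nat \<Rightarrow> 'a::comm_ring_1 poly \<Rightarrow> 'a poly \<Rightarrow> 'a" where
  "res_form d e F G = det (mat (d + e) (d + e) (\<lambda>(i, j).
      if i < e then (if i \<le> j \<and> j - i \<le> d then coeff F (j - i) else 0)
      else (if i - e \<le> j \<and> j - (i - e) \<le> e then coeff G (j - (i - e)) else 0)))"

text \<open>The degree-n form x d/dx f + t x y g with coefficients in k[t] (t = the poly variable).\<close>
definition DR_second :: "'a::idom poly \<Rightarrow> 'a poly \<Rightarrow> 'a poly poly" where
  "DR_second F G = map_poly (\<lambda>c. [:c:]) (pCons 0 (pderiv F))
      + smult [:0, 1:] (map_poly (\<lambda>c. [:c:]) (pCons 0 G))"

text \<open>sum_r DR_{n,r}(f,g) t^r = res(f, x f_x + t x y g) / (a_0 a_n) (exact division).\<close>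
definition DR_poly :: "nat \<Rightarrow> 'a::idom poly \<Rightarrow> 'a poly \<Rightarrow> 'a poly" where
  "DR_poly n F G = (THE P. smult (coeff F 0 * coeff F n) P
      = res_form n n (map_poly (\<lambda>c. [:c:]) F) (DR_second F G))"

definition DR :: "nat \<Rightarrow> nat \<Rightarrow> 'a::idom poly \<Rightarrow> 'a poly \<Rightarrow> 'a" where
  "DR n r F G = coeff (DR_poly n F G) r"

end

theory Submission
  imports Defs
begin

text \<open>Peeling a linear factor \<open>L = g0 x - g1 y\<close> off the first argument of a resultant multiplies
  it by \<open>(-1)^e h(g1, g0)\<close>, the value of the second argument \<open>h\<close> (of degree \<open>e\<close>) at the zero of
  \<open>L\<close>; this is a row reduction of the Sylvester matrix against the basis \<open>1, L, x L, x^2 L, \<dots>\<close>.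
  Hence \<open>res(f_n, h) = \<Prod>_j (-1)^n h(\<alpha>_j1, \<alpha>_j0)\<close>. For \<open>h = x \<partial>_x f_n + t x y f_(n-2)\<close> only one
  term of the product rule survives at the zero of \<open>\<alpha>_j\<close>, and
  \<open>h(\<alpha>_j1, \<alpha>_j0) = \<alpha>_j0 \<alpha>_j1 (P_j + t Q_j)\<close> with \<open>P_j = \<Prod>_(i\<noteq>j) [\<alpha>_i, \<alpha>_j]\<close> and
  \<open>Q_j = \<Prod>_m [\<beta>_m, \<alpha>_j]\<close>. As \<open>a_0 a_n = (-1)^n \<Prod>_j \<alpha>_j0 \<alpha>_j1\<close>, the generating polynomial
  \<open>\<Sum>_r DR_(n,r) t^r\<close> is \<open>\<Prod>_j (P_j + t Q_j)\<close>, whose coefficient of \<open>t^r\<close> is the sum over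
  \<open>|I| = r\<close>. For \<open>n = r = 2\<close> both sides of the claimed identity are \<open>1\<close>.\<close>

definition poly_rows_mat :: "nat \<Rightarrow> nat \<Rightarrow> (nat \<Rightarrow> 'a::comm_ring_1 poly) \<Rightarrow> 'a mat" where
  "poly_rows_mat K N p = mat K N (\<lambda>(i, j). coeff (p i) j)"

lemma poly_rows_mat_carrier [simp]: "poly_rows_mat K N p \<in> carrier_mat K N"
  and dim_poly_rows_mat [simp]: "dim_row (poly_rows_mat K N p) = K" "dim_col (poly_rows_mat K N p) = N"
  by (simp_all add: poly_rows_mat_def)

lemma index_poly_rows_mat [simp]:
  "i < K \<Longrightarrow> j < N \<Longrightarrow> poly_rows_mat K N p $$ (i, j) = coeff (p i) j"
  by (simp add: poly_rows_mat_def)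

lemma poly_rows_mat_cong:
  "(\<And>i. i < K \<Longrightarrow> p i = p' i) \<Longrightarrow> poly_rows_mat K N p = poly_rows_mat K N p'"
  by (rule eq_matI) auto

definition coeff_comb :: "nat \<Rightarrow> 'a::comm_ring_1 poly \<Rightarrow> (nat \<Rightarrow> 'a poly) \<Rightarrow> 'a poly" where
  "coeff_comb N p b = (\<Sum>k<N. smult (coeff p k) (b k))"

lemma poly_rows_mat_mult:
  "poly_rows_mat K N a * poly_rows_mat N M b = poly_rows_mat K M (\<lambda>i. coeff_comb N (a i) b)"
proof (rule eq_matI)
  fix i j assume "i < dim_row (poly_rows_mat K M (\<lambda>i. coeff_comb N (a i) b))"
    "j < dim_col (poly_rows_mat K M (\<lambda>i. coeff_comb N (a i) b))"
  then have i: "i < K" and j: "j < M" by auto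
  have "(poly_rows_mat K N a * poly_rows_mat N M b) $$ (i, j) = (\<Sum>k<N. coeff (a i) k * coeff (b k) j)"
    using i j by (auto simp: scalar_prod_def atLeast0LessThan intro!: sum.cong)
  then show "(poly_rows_mat K N a * poly_rows_mat N M b) $$ (i, j)
      = poly_rows_mat K M (\<lambda>i. coeff_comb N (a i) b) $$ (i, j)"
    using i j by (simp add: coeff_comb_def coeff_sum)
qed auto

lemma coeff_comb_monom: "i < N \<Longrightarrow> coeff_comb N (monom c i) b = smult c (b i)"
proof -
  assume "i < N"
  have "coeff_comb N (monom c i) b = (\<Sum>k<N. if k = i then smult c (b k) else 0)"
    unfolding coeff_comb_def by (intro sum.cong) auto
  with \<open>i < N\<close> show ?thesis by simp
qed

lemma coeff_comb_add: "coeff_comb N (p + q) b = coeff_comb N p b + coeff_comb N q b"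
  by (simp add: coeff_comb_def smult_add_left sum.distrib)

lemma det_poly_rows_mat_lower_triangular:
  assumes "\<And>i. i < N \<Longrightarrow> degree (p i) \<le> i"
  shows "det (poly_rows_mat N N p) = (\<Prod>i<N. coeff (p i) i)"
proof -
  have "det (poly_rows_mat N N p) = prod_list (diag_mat (poly_rows_mat N N p))"
  proof (rule det_lower_triangular[of N])
    fix i j assume "i < j" "j < N"
    then show "poly_rows_mat N N p $$ (i, j) = 0"
      using assms[of i] by (simp add: coeff_eq_0)
  qed simp
  also have "\<dots> = (\<Prod>i<N. coeff (p i) i)"
    by (simp add: diag_mat_def prod.list_conv_set_nth atLeast0LessThan)
  finally show ?thesis .
qed

text \<open>Laplace expansion along the first column, which has a single nonzero entry in row \<open>e\<close>.\<close>
lemma det_poly_rows_mat_pCons: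
  assumes "e \<le> N"
  shows "det (poly_rows_mat (Suc N) (Suc N)
            (\<lambda>i. if i = e then pCons c q else pCons 0 (r (if i < e then i else i - 1))))
         = (-1) ^ e * c * det (poly_rows_mat N N r)"
    (is "det ?T = _")
proof -
  have "mat_delete ?T e 0 = poly_rows_mat N N r"
    by (rule eq_matI) (auto simp: mat_delete_def)
  then have cof: "cofactor ?T e 0 = (-1) ^ e * det (poly_rows_mat N N r)"
    by (simp add: cofactor_def)
  have "det ?T = (\<Sum>i<Suc N. ?T $$ (i, 0) * cofactor ?T i 0)"
    by (rule laplace_expansion_column) auto
  also have "\<dots> = (\<Sum>i<Suc N. if i = e then c * cofactor ?T e 0 else 0)"
    by (intro sum.cong) auto
  also have "\<dots> = c * cofactor ?T e 0"
    using assms by (simp add: sum.delta')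
  finally show ?thesis
    by (simp add: cof)
qed

definition sylvester_rows :: "nat \<Rightarrow> 'a::comm_ring_1 poly \<Rightarrow> 'a poly \<Rightarrow> nat \<Rightarrow> 'a poly" where
  "sylvester_rows e F H i = (if i < e then monom 1 i * F else monom 1 (i - e) * H)"

lemma res_form_eq_det_sylvester_rows:
  assumes "degree F \<le> d" and "degree H \<le> e"
  shows "res_form d e F H = det (poly_rows_mat (d + e) (d + e) (sylvester_rows e F H))"
  unfolding res_form_def
  by (intro arg_cong[where f = det] eq_matI)
     (use assms in \<open>auto simp: sylvester_rows_def coeff_monom_mult coeff_eq_0\<close>)

definition lin_form_basis :: "'a::comm_ring_1 poly \<Rightarrow> nat \<Rightarrow> 'a poly" where
  "lin_form_basis L k = (if k = 0 then 1 else monom 1 (k - 1) * L)"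

lemma coeff_comb_pCons_lin_form_basis:
  assumes "\<And>k. M \<le> k \<Longrightarrow> coeff p k = 0"
  shows "coeff_comb (Suc M) (pCons c p) (lin_form_basis L) = [:c:] + L * p"
proof -
  have "coeff_comb (Suc M) (pCons c p) (lin_form_basis L)
      = [:c:] + (\<Sum>k<M. smult (coeff p k) (monom 1 k * L))"
    unfolding coeff_comb_def lin_form_basis_def by (subst sum.lessThan_Suc_shift) simp
  also have "(\<Sum>k<M. smult (coeff p k) (monom 1 k * L)) = (\<Sum>k<M. monom (coeff p k) k) * L"
    by (simp only: sum_distrib_right mult_smult_left[symmetric] smult_monom mult.right_neutral)
  also have "(\<Sum>k<M. monom (coeff p k) k) = p"
  proof (rule poly_eqI)
    fix n show "coeff (\<Sum>k<M. monom (coeff p k) k) n = coeff p n"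
      using assms[of n] by (auto simp: coeff_sum coeff_monom sum.delta' not_less)
  qed
  finally show ?thesis by (simp add: mult.commute)
qed

lemma degree_lin_form_le: "degree (lin_form g) \<le> 1"
  by (simp add: lin_form_def)

lemma degree_lin_form_basis_le: "degree (lin_form_basis (lin_form g) i) \<le> i"
proof (cases i)
  case (Suc k)
  have "degree (monom 1 k * lin_form g) \<le> k + 1"
    by (rule order.trans[OF degree_mult_le add_mono[OF degree_monom_le degree_lin_form_le]])
  with Suc show ?thesis by (simp add: lin_form_basis_def)
qed (simp add: lin_form_basis_def)

lemma coeff_lin_form_basis_diag:
  "coeff (lin_form_basis (lin_form g) i) i = (if i = 0 then 1 else fst g)"
  by (auto simp: lin_form_basis_def lin_form_def coeff_pCons split: nat.split)

lemma det_lin_form_basis: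
  "det (poly_rows_mat N N (lin_form_basis (lin_form g))) = fst g ^ (N - 1)"
proof -
  have "det (poly_rows_mat N N (lin_form_basis (lin_form g))) = (\<Prod>i<N. if i = 0 then 1 else fst g)"
    by (simp add: det_poly_rows_mat_lower_triangular degree_lin_form_basis_le
        coeff_lin_form_basis_diag)
  also have "\<dots> = fst g ^ (N - 1)"
    by (induction N) (auto simp: power_eq_if)
  finally show ?thesis .
qed

definition lin_form_reduction_rows :: "'a::comm_ring_1 \<times> 'a \<Rightarrow> nat \<Rightarrow> nat \<Rightarrow> 'a poly" where
  "lin_form_reduction_rows g e i = (if i = e then monom (fst g ^ e) e else if i < e then monom 1 i
     else lin_form_basis (lin_form g) i)"

lemma det_lin_form_reduction_rows:
  "det (poly_rows_mat (Suc (d + e)) (Suc (d + e)) (lin_form_reduction_rows g e)) = fst g ^ e * fst g ^ d"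
proof -
  have "det (poly_rows_mat (Suc (d + e)) (Suc (d + e)) (lin_form_reduction_rows g e))
      = (\<Prod>i<Suc (d + e). coeff (lin_form_reduction_rows g e i) i)"
    by (rule det_poly_rows_mat_lower_triangular)
       (simp add: lin_form_reduction_rows_def degree_monom_le degree_lin_form_basis_le)
  also have "\<dots> = (\<Prod>i<Suc (d + e). if i < e then 1 else if i = e then fst g ^ e else fst g)"
    by (rule prod.cong) (auto simp: lin_form_reduction_rows_def coeff_lin_form_basis_diag)
  also have "\<dots> = fst g ^ e * fst g ^ d"
  proof (induction d)
    case 0
    have "(\<Prod>i<e. if i < e then 1 else if i = e then fst g ^ e else fst g) = 1"
      by (intro prod.neutral) simp
    then show ?case by simp
  qed (simp add: mult_ac)
  finally show ?thesis .
qed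

text \<open>The binary form of formal degree \<open>e\<close> with dehomogenisation \<open>H\<close>, evaluated at
  \<open>(x, y) = (snd g, fst g)\<close>, the zero of \<open>lin_form g\<close>.\<close>
definition eval_form :: "nat \<Rightarrow> 'a::comm_ring_1 poly \<Rightarrow> 'a \<times> 'a \<Rightarrow> 'a" where
  "eval_form e H g = (\<Sum>m\<le>e. coeff H m * snd g ^ m * fst g ^ (e - m))"

lemma eval_form_add: "eval_form e (p + q) g = eval_form e p g + eval_form e q g"
  by (simp add: eval_form_def algebra_simps sum.distrib)

lemma eval_form_smult: "eval_form e (smult c p) g = c * eval_form e p g"
  by (simp add: eval_form_def sum_distrib_left mult_ac)

lemma eval_form_sum: "eval_form e (\<Sum>i\<in>S. f i) g = (\<Sum>i\<in>S. eval_form e (f i) g)"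
  by (induction S rule: infinite_finite_induct) (auto simp: eval_form_add eval_form_def[of _ 0])

lemma eval_form_pCons:
  "eval_form (Suc e) (pCons c p) g = c * fst g ^ Suc e + snd g * eval_form e p g"
  unfolding eval_form_def sum.atMost_Suc_shift by (simp add: sum_distrib_left mult_ac)

lemma eval_form_Suc:
  assumes "degree p \<le> e"
  shows "eval_form (Suc e) p g = fst g * eval_form e p g"
proof -
  have "eval_form (Suc e) p g = (\<Sum>m\<le>e. coeff p m * snd g ^ m * fst g ^ (Suc e - m))"
    using assms coeff_eq_0[of p "Suc e"] by (simp add: eval_form_def)
  also have "\<dots> = fst g * eval_form e p g"
    by (auto simp: eval_form_def sum_distrib_left Suc_diff_le mult_ac intro!: sum.cong)
  finally show ?thesis .
qed

lemma eval_form_lin_form_mult: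
  assumes "degree p \<le> e"
  shows "eval_form (Suc e) (lin_form b * p) g = bracket b g * eval_form e p g"
proof -
  have expand: "lin_form b * p = smult (- snd b) p + pCons 0 (smult (fst b) p)"
    by (simp add: lin_form_def)
  have "eval_form (Suc e) (lin_form b * p) g
      = - snd b * eval_form (Suc e) p g + snd g * (fst b * eval_form e p g)"
    unfolding expand eval_form_add eval_form_smult eval_form_pCons by simp
  also have "\<dots> = bracket b g * eval_form e p g"
    using assms by (simp add: eval_form_Suc bracket_def algebra_simps)
  finally show ?thesis .
qed

lemma degree_prod_lin_form_le: "finite A \<Longrightarrow> degree (\<Prod>i\<in>A. lin_form (b i)) \<le> card A"
proof (induction A rule: finite_induct)
  case (insert a A)
  then show ?case
    using order.trans[OF degree_mult_le add_mono[OF degree_lin_form_le insert.IH]] by simp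
qed simp

lemma eval_form_prod_lin_form:
  "finite A \<Longrightarrow> eval_form (card A) (\<Prod>i\<in>A. lin_form (b i)) g = (\<Prod>i\<in>A. bracket (b i) g)"
proof (induction A rule: finite_induct)
  case (insert a A)
  then show ?case
    using degree_prod_lin_form_le[OF insert(1), of b] by (simp add: eval_form_lin_form_mult)
qed (simp add: eval_form_def)

text \<open>Induction on \<open>e\<close>, writing \<open>H = c + x H'\<close> and \<open>fst g x = lin_form g + snd g\<close>.\<close>
lemma lin_form_dvd_smult_minus_eval_form:
  "degree H \<le> e \<Longrightarrow> lin_form g dvd smult (fst g ^ e) H - [:eval_form e H g:]"
proof (induction e arbitrary: H)
  case 0
  then show ?case by (auto simp: eval_form_def elim!: degree_eq_zeroE)
next
  case (Suc e)
  obtain c H' where H: "H = pCons c H'" by (cases H)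
  with Suc.prems have "degree H' \<le> e" by (cases "H' = 0") auto
  then have "lin_form g dvd smult (fst g ^ e) H' - [:eval_form e H' g:]" by (rule Suc.IH)
  moreover have "smult (fst g ^ Suc e) H - [:eval_form (Suc e) H g:]
      = smult (fst g ^ e) H' * lin_form g + smult (snd g) (smult (fst g ^ e) H' - [:eval_form e H' g:])"
    by (rule poly_eqI) (simp add: H eval_form_pCons lin_form_def coeff_pCons algebra_simps split: nat.split)
  ultimately show ?case by (metis dvd_add dvd_smult dvd_triv_right)
qed

lemma lin_form_division:
  fixes g :: "'a::idom \<times> 'a"
  assumes g: "fst g \<noteq> 0" and H: "degree H \<le> e"
  obtains q where "smult (fst g ^ e) H = [:eval_form e H g:] + lin_form g * q"
    and "\<And>k. e \<le> k \<Longrightarrow> coeff q k = 0"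
proof -
  obtain q where q: "smult (fst g ^ e) H = [:eval_form e H g:] + lin_form g * q"
    using lin_form_dvd_smult_minus_eval_form[OF H, of g] by (metis diff_eq_eq add.commute dvdE)
  have "coeff q k = 0" if "e \<le> k" for k
  proof (cases "q = 0")
    case False
    with g have "degree (lin_form g * q) = Suc (degree q)"
      by (subst degree_mult_eq) (auto simp: lin_form_def)
    moreover have "degree (lin_form g * q) \<le> e"
      using q H by (metis add_diff_cancel_left' degree_diff_le degree_pCons_0 degree_smult_le
          le_zero_eq order.trans zero_le)
    ultimately show ?thesis using that by (intro coeff_eq_0) simp
  qed simp
  with q that show ?thesis by blast
qed

lemma sylvester_rows_lin_form_mult_reduction:
  assumes q: "smult (fst g ^ e) H = [:c:] + lin_form g * q"
    and q_high: "\<And>k. e \<le> k \<Longrightarrow> coeff q k = 0"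
    and F: "degree F \<le> d" and H: "degree H \<le> e" and i: "i < Suc (d + e)"
  shows "coeff_comb (Suc (d + e)) (lin_form_reduction_rows g e i) (sylvester_rows e (lin_form g * F) H)
       = coeff_comb (Suc (d + e))
           (if i = e then pCons c q else pCons 0 (sylvester_rows e F H (if i < e then i else i - 1)))
           (lin_form_basis (lin_form g))"
proof -
  define L where "L = lin_form g"
  consider "i < e" | "i = e" | "e < i"
    by linarith
  then show ?thesis
  proof cases
    case 1
    have "coeff (monom 1 i * F) k = 0" if "d + e \<le> k" for k
      using F \<open>i < e\<close> that by (simp add: coeff_monom_mult coeff_eq_0)
    then show ?thesis
      using 1 i by (simp add: lin_form_reduction_rows_def sylvester_rows_def coeff_comb_monom coeff_comb_pCons_lin_form_basis
          mult.left_commute)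
  next
    case 2
    then show ?thesis
      using q_high by (simp add: lin_form_reduction_rows_def sylvester_rows_def coeff_comb_monom
          coeff_comb_pCons_lin_form_basis q)
  next
    case 3
    define m where "m = i - Suc e"
    have i: "i = Suc (e + m)" and "m < d"
      using 3 i by (simp_all add: m_def)
    have "coeff (monom 1 m * H) k = 0" if "d + e \<le> k" for k
      using H \<open>m < d\<close> that by (simp add: coeff_monom_mult coeff_eq_0)
    then have "coeff_comb (Suc (d + e)) (pCons 0 (monom 1 m * H)) (lin_form_basis L) = L * (monom 1 m * H)"
      by (simp add: coeff_comb_pCons_lin_form_basis)
    moreover have "lin_form_basis L i = monom (- snd g) (e + m) + monom (fst g) (Suc (e + m))"
      using i by (simp add: lin_form_basis_def L_def lin_form_def monom_Suc smult_monom
          minus_monom[symmetric])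
    then have "coeff_comb (Suc (d + e)) (lin_form_basis L i) (sylvester_rows e (L * F) H)
        = smult (- snd g) (monom 1 m * H) + smult (fst g) (monom 1 (Suc m) * H)"
      using i \<open>m < d\<close> by (simp add: sylvester_rows_def coeff_comb_add coeff_comb_monom)
    moreover have "smult (- snd g) (monom 1 m * H) + smult (fst g) (monom 1 (Suc m) * H)
        = L * (monom 1 m * H)"
      by (simp add: L_def lin_form_def monom_Suc algebra_simps)
    ultimately show ?thesis
      using i by (simp add: lin_form_reduction_rows_def sylvester_rows_def L_def)
  qed
qed

text \<open>Left multiplication by the triangular matrix of \<open>lin_form_reduction_rows g e\<close> turns the
  Sylvester matrix of \<open>L F\<close> and \<open>H\<close> into \<open>T B\<close>, where \<open>B\<close> is the triangular matrix of the basis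
  \<open>1, L, x L, x\<^sup>2 L, \<dots>\<close> and the first column of \<open>T\<close> has the single nonzero entry
  \<open>eval_form e H g\<close>; deleting it leaves the Sylvester matrix of \<open>F\<close> and \<open>H\<close>.\<close>
lemma res_form_lin_form_mult:
  fixes g :: "'a::idom \<times> 'a"
  assumes g: "fst g \<noteq> 0" and F: "degree F \<le> d" and H: "degree H \<le> e"
  shows "res_form (Suc d) e (lin_form g * F) H = (-1) ^ e * eval_form e H g * res_form d e F H"
proof -
  define L where "L = lin_form g"
  define N where "N = Suc (d + e)"
  define \<rho> where "\<rho> = eval_form e H g"
  obtain q where q: "smult (fst g ^ e) H = [:\<rho>:] + L * q" and q_high: "\<And>k. e \<le> k \<Longrightarrow> coeff q k = 0"
    using lin_form_division[OF g H] unfolding L_def \<rho>_def by blast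
  define S where "S = sylvester_rows e (L * F) H"
  define T where "T i = (if i = e then pCons \<rho> q
                         else pCons 0 (sylvester_rows e F H (if i < e then i else i - 1)))" for i
  have "poly_rows_mat N N (lin_form_reduction_rows g e) * poly_rows_mat N N S
      = poly_rows_mat N N T * poly_rows_mat N N (lin_form_basis L)"
    unfolding poly_rows_mat_mult N_def S_def T_def L_def
    by (intro poly_rows_mat_cong sylvester_rows_lin_form_mult_reduction[OF q[unfolded L_def] q_high F H])
  then have "det (poly_rows_mat N N (lin_form_reduction_rows g e)) * det (poly_rows_mat N N S)
      = det (poly_rows_mat N N T) * det (poly_rows_mat N N (lin_form_basis L))"
    by (metis det_mult poly_rows_mat_carrier)
  moreover have "det (poly_rows_mat N N T) = (-1) ^ e * \<rho> * res_form d e F H"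
    unfolding T_def N_def
    by (subst det_poly_rows_mat_pCons) (simp_all add: res_form_eq_det_sylvester_rows F H)
  moreover have "det (poly_rows_mat N N S) = res_form (Suc d) e (L * F) H"
  proof -
    have "degree (L * F) \<le> 1 + d"
      unfolding L_def by (rule order.trans[OF degree_mult_le add_mono[OF degree_lin_form_le F]])
    then show ?thesis
      unfolding S_def N_def by (subst res_form_eq_det_sylvester_rows) (simp_all add: H)
  qed
  ultimately show ?thesis
    using g by (simp add: det_lin_form_reduction_rows det_lin_form_basis L_def \<rho>_def N_def
        power_add mult_ac)
qed

lemma res_form_prod_lin_form:
  fixes g :: "'i \<Rightarrow> 'a::idom \<times> 'a"
  assumes "finite A" and "\<And>i. i \<in> A \<Longrightarrow> fst (g i) \<noteq> 0" and "degree H \<le> e"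
  shows "res_form (card A) e (\<Prod>i\<in>A. lin_form (g i)) H = (\<Prod>i\<in>A. (-1) ^ e * eval_form e H (g i))"
  using assms
proof (induction A rule: finite_induct)
  case empty
  have "res_form 0 e 1 H = det (1\<^sub>m e)"
    unfolding res_form_def by (intro arg_cong[where f = det] eq_matI) auto
  then show ?case by simp
next
  case (insert a A)
  then have "res_form (card (insert a A)) e (\<Prod>i\<in>insert a A. lin_form (g i)) H
      = (-1) ^ e * eval_form e H (g a) * res_form (card A) e (\<Prod>i\<in>A. lin_form (g i)) H"
    by (simp add: res_form_lin_form_mult degree_prod_lin_form_le)
  with insert show ?case by (simp add: mult_ac)
qed

lemma map_poly_const_prod_lin_form:
  "map_poly (\<lambda>c. [:c:]) (\<Prod>i\<in>A. lin_form (a i))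
     = (\<Prod>i\<in>A. lin_form ([:fst (a i):], [:snd (a i):]))"
proof (induction A rule: infinite_finite_induct)
  case (insert x A)
  have "map_poly (\<lambda>c. [:c:]) (lin_form (a x) * p)
      = lin_form ([:fst (a x):], [:snd (a x):]) * map_poly (\<lambda>c. [:c:]) p" for p
  proof -
    have "lin_form (a x) * p = smult (- snd (a x)) p + pCons 0 (smult (fst (a x)) p)"
      by (simp add: lin_form_def)
    then show ?thesis
      by (intro poly_eqI) (simp add: coeff_map_poly lin_form_def coeff_pCons split: nat.split)
  qed
  with insert show ?case by simp
qed (simp_all add: one_pCons map_poly_pCons)

lemma eval_form_map_poly_const:
  "eval_form e (map_poly (\<lambda>c. [:c:]) p) ([:x:], [:y:]) = [:eval_form e p (x, y):]"
proof -
  have "(\<Sum>i\<in>S. [:f i:]) = [:sum f S:]" for S and f :: "nat \<Rightarrow> 'a"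
    by (induction S rule: infinite_finite_induct) auto
  then show ?thesis
    by (simp add: eval_form_def coeff_map_poly poly_const_pow mult_ac)
qed

lemma coeff_prod_linear_polys:
  fixes p q :: "'i \<Rightarrow> 'a::comm_ring_1"
  assumes A: "finite A"
  shows "coeff (\<Prod>j\<in>A. [:p j, q j:]) r
       = (\<Sum>I\<in>{I. I \<subseteq> A \<and> card I = r}. (\<Prod>j\<in>A - I. p j) * (\<Prod>i\<in>I. q i))"
proof -
  have monom_prod: "(\<Prod>x\<in>X. monom (q x) 1) = monom (\<Prod>x\<in>X. q x) (card X)" if "finite X" for X
    using that by (induction X rule: finite_induct) (simp_all add: mult_monom monom_0 one_pCons)
  have const_prod: "(\<Prod>x\<in>X. [:p x:]) = [:\<Prod>x\<in>X. p x:]" for X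
    by (induction X rule: infinite_finite_induct) (simp_all add: one_pCons)
  have "(\<Prod>j\<in>A. [:p j, q j:]) = (\<Prod>j\<in>A. monom (q j) 1 + [:p j:])"
    by (intro prod.cong refl) (simp add: monom_Suc monom_0)
  also have "\<dots> = (\<Sum>X\<in>Pow A. (\<Prod>x\<in>X. monom (q x) 1) * (\<Prod>x\<in>A - X. [:p x:]))"
    by (rule prod_add[OF A])
  also have "\<dots> = (\<Sum>X\<in>Pow A. monom ((\<Prod>x\<in>X. q x) * (\<Prod>x\<in>A - X. p x)) (card X))"
  proof (intro sum.cong refl)
    fix X assume "X \<in> Pow A"
    with A have "finite X" by (auto intro: finite_subset)
    moreover have "monom a k * [:b:] = monom (a * b) k" for a b :: 'a and k
      by (metis monom_0 mult_monom add_0_right)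
    ultimately show "(\<Prod>x\<in>X. monom (q x) 1) * (\<Prod>x\<in>A - X. [:p x:])
        = monom ((\<Prod>x\<in>X. q x) * (\<Prod>x\<in>A - X. p x)) (card X)"
      by (simp only: monom_prod const_prod)
  qed
  finally have "coeff (\<Prod>j\<in>A. [:p j, q j:]) r
      = (\<Sum>X\<in>Pow A. if card X = r then (\<Prod>x\<in>X. q x) * (\<Prod>x\<in>A - X. p x) else 0)"
    by (simp add: coeff_sum)
  also have "\<dots> = (\<Sum>X\<in>{I. I \<subseteq> A \<and> card I = r}. (\<Prod>x\<in>X. q x) * (\<Prod>x\<in>A - X. p x))"
  proof -
    have subsets: "{I. I \<subseteq> A \<and> card I = r} = {X \<in> Pow A. card X = r}" by auto
    show ?thesis unfolding subsets by (rule sum.inter_filter[symmetric]) (simp add: A)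
  qed
  finally show ?thesis by (simp add: mult_ac)
qed

lemma degree_pderiv_le: "degree (pderiv p) \<le> degree p - 1"
  by (rule degree_le) (auto simp: coeff_pderiv coeff_eq_0)

lemma degree_DR_second:
  assumes "degree F \<le> Suc (Suc k)" and "degree G \<le> k"
  shows "degree (DR_second F G) \<le> Suc (Suc k)"
proof -
  have "degree (pCons 0 (pderiv F)) \<le> Suc (Suc k)"
    using assms(1) degree_pCons_le[of 0 "pderiv F"] degree_pderiv_le[of F] by linarith
  moreover have "degree (pCons 0 G) \<le> Suc (Suc k)"
    using assms(2) degree_pCons_le[of 0 G] by simp
  ultimately show ?thesis
    unfolding DR_second_def
    by (intro degree_add_le order.trans[OF degree_smult_le]) (simp_all add: degree_map_poly)
qed

lemma pderiv_lin_form: "pderiv (lin_form a) = [:fst a:]"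
  by (simp add: lin_form_def pderiv_pCons)

text \<open>Only the term of the product rule that omits the factor vanishing at the zero of \<open>\<alpha> j\<close> survives.\<close>
lemma eval_form_pderiv_prod_lin_form:
  assumes A: "finite A" and j: "j \<in> A"
  shows "eval_form (card A - 1) (pderiv (\<Prod>i\<in>A. lin_form (\<alpha> i))) (\<alpha> j)
       = fst (\<alpha> j) * (\<Prod>i\<in>A - {j}. bracket (\<alpha> i) (\<alpha> j))"
proof -
  have "eval_form (card A - 1) (pderiv (\<Prod>i\<in>A. lin_form (\<alpha> i))) (\<alpha> j)
      = (\<Sum>k\<in>A. fst (\<alpha> k) * (\<Prod>i\<in>A - {k}. bracket (\<alpha> i) (\<alpha> j)))"
    using A by (simp add: pderiv_prod pderiv_lin_form eval_form_sum eval_form_smult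
        eval_form_prod_lin_form[symmetric] card_Diff_singleton cong: sum.cong)
  also have "\<dots> = fst (\<alpha> j) * (\<Prod>i\<in>A - {j}. bracket (\<alpha> i) (\<alpha> j))
      + (\<Sum>k\<in>A - {j}. fst (\<alpha> k) * (\<Prod>i\<in>A - {k}. bracket (\<alpha> i) (\<alpha> j)))"
    by (rule sum.remove[OF A j])
  also have "(\<Sum>k\<in>A - {j}. fst (\<alpha> k) * (\<Prod>i\<in>A - {k}. bracket (\<alpha> i) (\<alpha> j))) = 0"
  proof (intro sum.neutral ballI)
    fix k assume "k \<in> A - {j}"
    with A j have "(\<Prod>i\<in>A - {k}. bracket (\<alpha> i) (\<alpha> j)) = 0"
      by (intro prod_zero) (auto simp: bracket_def mult.commute intro!: bexI[of _ j])
    then show "fst (\<alpha> k) * (\<Prod>i\<in>A - {k}. bracket (\<alpha> i) (\<alpha> j)) = 0" by simp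
  qed
  finally show ?thesis by simp
qed

lemma eval_form_DR_second:
  assumes A: "finite A" "j \<in> A" and B: "finite B" "card A = Suc (Suc (card B))"
  shows "eval_form (card A) (DR_second (\<Prod>i\<in>A. lin_form (\<alpha> i)) (\<Prod>m\<in>B. lin_form (\<beta> m)))
           ([:fst (\<alpha> j):], [:snd (\<alpha> j):])
       = smult (snd (\<alpha> j) * fst (\<alpha> j))
           [:\<Prod>i\<in>A - {j}. bracket (\<alpha> i) (\<alpha> j), \<Prod>m\<in>B. bracket (\<beta> m) (\<alpha> j):]"
proof -
  define G where "G = (\<Prod>m\<in>B. lin_form (\<beta> m))"
  have card_A: "card A = Suc (card A - 1)"
    using B by simp
  have "eval_form (card A) (pCons 0 (pderiv (\<Prod>i\<in>A. lin_form (\<alpha> i)))) (\<alpha> j)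
      = snd (\<alpha> j) * (fst (\<alpha> j) * (\<Prod>i\<in>A - {j}. bracket (\<alpha> i) (\<alpha> j)))"
    unfolding eval_form_pCons[of "card A - 1" 0 "pderiv (\<Prod>i\<in>A. lin_form (\<alpha> i))" "\<alpha> j", folded card_A]
      eval_form_pderiv_prod_lin_form[OF A]
    by simp
  moreover have "eval_form (card A) (pCons 0 G) (\<alpha> j)
      = snd (\<alpha> j) * (fst (\<alpha> j) * (\<Prod>m\<in>B. bracket (\<beta> m) (\<alpha> j)))"
    using B by (simp add: eval_form_pCons eval_form_Suc G_def degree_prod_lin_form_le
        eval_form_prod_lin_form)
  ultimately show ?thesis
    unfolding DR_second_def G_def[symmetric]
    by (simp add: eval_form_add eval_form_smult eval_form_map_poly_const algebra_simps)
qed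

lemma coeff_0_mult_lead_coeff_prod_lin_form:
  fixes \<alpha> :: "'i \<Rightarrow> 'a::idom \<times> 'a"
  assumes A: "finite A" and \<alpha>: "\<And>i. i \<in> A \<Longrightarrow> fst (\<alpha> i) \<noteq> 0"
  shows "coeff (\<Prod>i\<in>A. lin_form (\<alpha> i)) 0 * coeff (\<Prod>i\<in>A. lin_form (\<alpha> i)) (card A)
       = (-1) ^ card A * (\<Prod>i\<in>A. snd (\<alpha> i) * fst (\<alpha> i))"
proof -
  have "coeff (\<Prod>i\<in>A. lin_form (\<alpha> i)) 0 = (-1) ^ card A * (\<Prod>i\<in>A. snd (\<alpha> i))"
    by (simp add: poly_0_coeff_0[symmetric] poly_prod lin_form_def prod_uminus A)
  moreover have "degree (\<Prod>i\<in>A. lin_form (\<alpha> i)) = card A"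
    using \<alpha> by (subst degree_prod_eq_sum_degree) (auto simp: lin_form_def)
  then have "coeff (\<Prod>i\<in>A. lin_form (\<alpha> i)) (card A) = (\<Prod>i\<in>A. fst (\<alpha> i))"
    using lead_coeff_prod[of "\<lambda>i. lin_form (\<alpha> i)" A] \<alpha> by (simp add: lin_form_def)
  ultimately show ?thesis by (simp add: prod.distrib)
qed

lemma DR_poly_eqI:
  assumes "coeff F 0 * coeff F n \<noteq> 0"
    and "smult (coeff F 0 * coeff F n) P = res_form n n (map_poly (\<lambda>c. [:c:]) F) (DR_second F G)"
  shows "DR_poly n F G = P"
  unfolding DR_poly_def
proof (rule the_equality)
  fix P' assume "smult (coeff F 0 * coeff F n) P'
      = res_form n n (map_poly (\<lambda>c. [:c:]) F) (DR_second F G)"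
  with assms show "P' = P" by (metis smult_cancel)
qed (rule assms(2))

lemma minus_one_power_mult_smult:
  "(-1 :: 'a::comm_ring_1 poly) ^ n * smult c p = smult ((-1) ^ n * c) p"
  by (induction n) auto

lemma minus_one_power_square: "(-1 :: 'a::ring_1) ^ (n * n) = (-1) ^ n"
  by (cases "even n") simp_all

lemma DR_poly_prod_lin_form:
  fixes \<alpha> :: "'i \<Rightarrow> 'a::idom \<times> 'a"
  assumes A: "finite A" and B: "finite B" "card A = Suc (Suc (card B))"
    and \<alpha>: "\<And>i. i \<in> A \<Longrightarrow> fst (\<alpha> i) \<noteq> 0 \<and> snd (\<alpha> i) \<noteq> 0"
  shows "DR_poly (card A) (\<Prod>i\<in>A. lin_form (\<alpha> i)) (\<Prod>m\<in>B. lin_form (\<beta> m))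
       = (\<Prod>j\<in>A. [:\<Prod>i\<in>A - {j}. bracket (\<alpha> i) (\<alpha> j), \<Prod>m\<in>B. bracket (\<beta> m) (\<alpha> j):])"
proof -
  define F where "F = (\<Prod>i\<in>A. lin_form (\<alpha> i))"
  define G where "G = (\<Prod>m\<in>B. lin_form (\<beta> m))"
  define c where "c = (\<Prod>j\<in>A. snd (\<alpha> j) * fst (\<alpha> j))"
  have "degree (DR_second F G) \<le> card A"
    using B degree_prod_lin_form_le[OF A, of \<alpha>] degree_prod_lin_form_le[OF B(1), of \<beta>]
    by (simp add: degree_DR_second F_def G_def)
  then have "res_form (card A) (card A) (map_poly (\<lambda>c. [:c:]) F) (DR_second F G)
      = (\<Prod>j\<in>A. (-1) ^ card A * eval_form (card A) (DR_second F G) ([:fst (\<alpha> j):], [:snd (\<alpha> j):]))"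
    unfolding F_def map_poly_const_prod_lin_form using A \<alpha>
    by (subst res_form_prod_lin_form) auto
  also have "\<dots> = (\<Prod>j\<in>A. smult ((-1) ^ card A * (snd (\<alpha> j) * fst (\<alpha> j)))
      [:\<Prod>i\<in>A - {j}. bracket (\<alpha> i) (\<alpha> j), \<Prod>m\<in>B. bracket (\<beta> m) (\<alpha> j):])"
    unfolding F_def G_def
    by (intro prod.cong refl) (simp only: eval_form_DR_second[OF A _ B] minus_one_power_mult_smult)
  also have "\<dots> = smult (\<Prod>j\<in>A. (-1) ^ card A * (snd (\<alpha> j) * fst (\<alpha> j)))
      (\<Prod>j\<in>A. [:\<Prod>i\<in>A - {j}. bracket (\<alpha> i) (\<alpha> j), \<Prod>m\<in>B. bracket (\<beta> m) (\<alpha> j):])"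
    by (rule prod_smult)
  also have "(\<Prod>j\<in>A. (-1) ^ card A * (snd (\<alpha> j) * fst (\<alpha> j))) = (-1) ^ card A * c"
    by (simp add: prod.distrib c_def power_mult[symmetric] minus_one_power_square)
  finally have res: "smult ((-1) ^ card A * c)
      (\<Prod>j\<in>A. [:\<Prod>i\<in>A - {j}. bracket (\<alpha> i) (\<alpha> j), \<Prod>m\<in>B. bracket (\<beta> m) (\<alpha> j):])
      = res_form (card A) (card A) (map_poly (\<lambda>c. [:c:]) F) (DR_second F G)" ..
  have coeffs: "coeff F 0 * coeff F (card A) = (-1) ^ card A * c"
    unfolding F_def c_def using \<alpha> by (intro coeff_0_mult_lead_coeff_prod_lin_form[OF A]) blast
  have "c \<noteq> 0"
    unfolding c_def using A \<alpha> by (simp add: prod_zero_iff)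
  with res coeffs show ?thesis
    unfolding F_def G_def by (intro DR_poly_eqI) simp_all
qed

theorem theorem2p1:
  fixes \<alpha> \<beta> :: "nat \<Rightarrow> 'a::{idom, ring_char_0} \<times> 'a" and n r :: nat
  assumes "n \<ge> 2" and "r \<le> n"
    and "\<forall>i\<in>{1..n}. fst (\<alpha> i) \<noteq> 0 \<and> snd (\<alpha> i) \<noteq> 0"
  shows "let F = (\<Prod>i=1..n. lin_form (\<alpha> i));
             G = (\<Prod>m=1..n-2. lin_form (\<beta> m))
         in (if n = 2 \<and> r = 2 then DR n r F G = (coeff G 0)^2
             else DR n r F G =
               (\<Sum>I\<in>{I. I \<subseteq> {1..n} \<and> card I = r}.
                  (\<Prod>j\<in>{1..n} - I. \<Prod>i\<in>{1..n} - {j}. bracket (\<alpha> i) (\<alpha> j)) *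
                  (\<Prod>i\<in>I. \<Prod>m\<in>{1..n-2}. bracket (\<beta> m) (\<alpha> i))))"
proof -
  define F where "F = (\<Prod>i=1..n. lin_form (\<alpha> i))"
  define G where "G = (\<Prod>m=1..n-2. lin_form (\<beta> m))"
  have "card {1..n} = Suc (Suc (card {1..n-2}))"
    using assms(1) by simp
  then have "DR_poly n F G = (\<Prod>j\<in>{1..n}.
      [:\<Prod>i\<in>{1..n} - {j}. bracket (\<alpha> i) (\<alpha> j), \<Prod>m\<in>{1..n-2}. bracket (\<beta> m) (\<alpha> j):])"
    using DR_poly_prod_lin_form[of "{1..n}" "{1..n-2}" \<alpha> \<beta>] assms(3) by (simp add: F_def G_def)
  then have DR: "DR n r F G =
      (\<Sum>I\<in>{I. I \<subseteq> {1..n} \<and> card I = r}.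
         (\<Prod>j\<in>{1..n} - I. \<Prod>i\<in>{1..n} - {j}. bracket (\<alpha> i) (\<alpha> j)) *
         (\<Prod>i\<in>I. \<Prod>m\<in>{1..n-2}. bracket (\<beta> m) (\<alpha> i)))"
    by (simp add: DR_def coeff_prod_linear_polys)
  moreover have "DR n r F G = (coeff G 0) ^ 2" if "n = 2" and "r = 2"
  proof -
    from that have "{I. I \<subseteq> {1..n} \<and> card I = r} = {{1..n}}"
      using card_subset_eq[of "{1..n}"] by auto
    with that DR show ?thesis
      by (simp add: G_def)
  qed
  ultimately show ?thesis
    unfolding Let_def F_def[symmetric] G_def[symmetric] by simp
qed

end
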